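(* There exist an alphabet $A$ and words $\mathbf a,\mathbf c\in A^\ast$ such that $\mathbf a:\mathbf a^r::_m\mathbf c:\mathbf c^r$ does not hold in $(A^\ast,\cdot,A^\ast)$.
   Context: The reverse of a word $\mathbf a=a_1\ldots a_n$ is $\mathbf a^r:=a_n\ldots a_1$. $(A^\ast,\cdot,A^\ast)$ is the algebra whose universe is the set $A^\ast$ of all finite words over $A$ (including the empty word), with concatenation and every word as a constant. A justification is a pair of terms $s\to t$ with the variables of $t$ among those of $s$; monolinear justifications are those where $s,t$ contain only one fixed variable $x$, occurring at most once in $s$ and at most once in $t$. $\uparrow^m(\mathbf a\to\mathbf b)$ is the set of monolinear justifications $s\to t$ with $\mathbf a=s(\mathbf o)$, $\mathbf b=t(\mathbf o)$ for some value $\mathbf o$; $\uparrow^m(\mathbf a\to\mathbf b:\!\cdot\,\mathbf c\to\mathbf d):=\uparrow^m(\mathbf a\to\mathbf b)\cap\uparrow^m(\mathbf c\to\mathbf d)$. A monolinear justification is trivial if it lies in all sets $\uparrow^m(\mathbf a'\to\mathbf b':\!\cdot\,\mathbf c'\to\mathbf d')$. $\mathbf a\to\mathbf b:\!\cdot_m\,\mathbf c\to\mathbf d$ holds iff either (i) all justifications in $\uparrow^m(\mathbf a\to\mathbf b)\cup\uparrow^m(\mathbf c\to\mathbf d)$ are trivial, or (ii) $J_{\mathbf d}:=\uparrow^m(\mathbf a\to\mathbf b:\!\cdot\,\mathbf c\to\mathbf d)$ contains a non-trivial justification and for every $\mathbf d'$, $J_{\mathbf d}\subseteq J_{\mathbf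 d'}$ implies $J_{\mathbf d'}$ contains a non-trivial justification and $J_{\mathbf d'}\subseteq J_{\mathbf d}$ (ignoring trivial justifications). $\mathbf a:\mathbf b::_m\mathbf c:\mathbf d$ iff $\mathbf a\to\mathbf b:\!\cdot_m\,\mathbf c\to\mathbf d$, $\mathbf b\to\mathbf a:\!\cdot_m\,\mathbf d\to\mathbf c$, $\mathbf c\to\mathbf d:\!\cdot_m\,\mathbf a\to\mathbf b$, $\mathbf d\to\mathbf c:\!\cdot_m\,\mathbf b\to\mathbf a$ all hold. *)

theory Defs
  imports Main
begin

text \<open>Monolinear terms over the word algebra (A*, concatenation, A*) in the single
variable x, modulo associativity: either a constant word w (x does not occur) or
u x v (x occurs exactly once).\<close>

datatype 'a mterm = MConst "'a list" | MLin "'a list" "'a list"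

fun mev :: "'a mterm \<Rightarrow> 'a list \<Rightarrow> 'a list" where
  "mev (MConst w) o' = w"
| "mev (MLin u v) o' = u @ o' @ v"

fun mterm_over :: "'a set \<Rightarrow> 'a mterm \<Rightarrow> bool" where
  "mterm_over A (MConst w) = (w \<in> lists A)"
| "mterm_over A (MLin u v) = (u \<in> lists A \<and> v \<in> lists A)"

fun has_var :: "'a mterm \<Rightarrow> bool" where
  "has_var (MConst w) = False"
| "has_var (MLin u v) = True"

definition mjust :: "'a set \<Rightarrow> ('a mterm \<times> 'a mterm) set" where
  "mjust A = {(s, t). mterm_over A s \<and> mterm_over A t \<and> (has_var t \<longrightarrow> has_var s)}"

definition Jm :: "'a set \<Rightarrow> 'a list \<Rightarrow> 'a list \<Rightarrow> ('a mterm \<times> 'a mterm) set" where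
  "Jm A a b = {(s, t). (s, t) \<in> mjust A \<and> (\<exists>o'\<in>lists A. a = mev s o' \<and> b = mev t o')}"

definition Jm2 :: "'a set \<Rightarrow> 'a list \<Rightarrow> 'a list \<Rightarrow> 'a list \<Rightarrow> 'a list \<Rightarrow> ('a mterm \<times> 'a mterm) set" where
  "Jm2 A a b c d = Jm A a b \<inter> Jm A c d"

definition trivial_mj :: "'a set \<Rightarrow> 'a mterm \<times> 'a mterm \<Rightarrow> bool" where
  "trivial_mj A j \<longleftrightarrow> j \<in> mjust A \<and>
     (\<forall>a'\<in>lists A. \<forall>b'\<in>lists A. \<forall>c'\<in>lists A. \<forall>d'\<in>lists A. j \<in> Jm2 A a' b' c' d')"

definition nontriv :: "'a set \<Rightarrow> ('a mterm \<times> 'a mterm) set \<Rightarrow> ('a mterm \<times> 'a mterm) set" where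
  "nontriv A S = {j \<in> S. \<not> trivial_mj A j}"

definition marrow :: "'a set \<Rightarrow> 'a list \<Rightarrow> 'a list \<Rightarrow> 'a list \<Rightarrow> 'a list \<Rightarrow> bool" where
  "marrow A a b c d \<longleftrightarrow>
     (\<forall>j \<in> Jm A a b \<union> Jm A c d. trivial_mj A j)
   \<or> (nontriv A (Jm2 A a b c d) \<noteq> {} \<and>
      (\<forall>d'\<in>lists A. nontriv A (Jm2 A a b c d) \<subseteq> nontriv A (Jm2 A a b c d') \<longrightarrow>
          nontriv A (Jm2 A a b c d') \<noteq> {} \<and>
          nontriv A (Jm2 A a b c d') \<subseteq> nontriv A (Jm2 A a b c d)))"

definition mprop :: "'a set \<Rightarrow> 'a list \<Rightarrow> 'a list \<Rightarrow> 'a list \<Rightarrow> 'a list \<Rightarrow> bool" where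
  "mprop A a b c d \<longleftrightarrow> marrow A a b c d \<and> marrow A b a d c \<and> marrow A c d a b \<and> marrow A d c b a"

end

theory Submission
  imports Defs
begin

text \<open>Over a nonempty alphabet no monolinear justification is trivial, and every arrow
a \<rightarrow> b is justified by the constant justification a \<rightarrow> b. Hence a \<rightarrow> b :\<cdot>_m c \<rightarrow> d forces
the two arrows to share a justification. For distinct letters x, y the arrows xy \<rightarrow> yx
and yx \<rightarrow> xy share none: a justification u x v \<rightarrow> u' x v' of both must have empty
context u = v = [], since the instances of the left-hand side differ in their first
and in their last letter; then the instance xy must be mapped to yx by u' x v', which
by length forces xy = yx.\<close>

lemma no_trivial_mj:
  assumes "A \<noteq> {}"
  shows "\<not> trivial_mj A (s, t)"
proof
  assume "trivial_mj A (s, t)"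
  moreover obtain x where "x \<in> A" using assms by blast
  moreover have "[] \<in> lists A" "[x] \<in> lists A"
    using \<open>x \<in> A\<close> by simp_all
  ultimately have "(s, t) \<in> Jm2 A [] [] [] [x]"
    unfolding trivial_mj_def by blast
  then obtain o1 o2 where
    "mev s o1 = []" "mev t o1 = []" "mev s o2 = []" "mev t o2 = [x]" "has_var t \<longrightarrow> has_var s"
    unfolding Jm2_def Jm_def mjust_def by (auto simp: eq_commute[of "[]"])
  then show False
    by (cases s; cases t) auto
qed

lemma const_justification_in_Jm:
  "a \<in> lists A \<Longrightarrow> b \<in> lists A \<Longrightarrow> (MConst a, MConst b) \<in> Jm A a b"
  unfolding Jm_def mjust_def by auto

lemma marrow_imp_Jm2_nonempty:
  assumes "A \<noteq> {}" "a \<in> lists A" "b \<in> lists A" and marrow: "marrow A a b c d"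
  shows "Jm2 A a b c d \<noteq> {}"
proof
  assume "Jm2 A a b c d = {}"
  then have "nontriv A (Jm2 A a b c d) = {}"
    by (simp add: nontriv_def)
  moreover have "\<exists>j \<in> Jm A a b \<union> Jm A c d. \<not> trivial_mj A j"
    using const_justification_in_Jm[OF assms(2,3)] no_trivial_mj[OF assms(1)] by blast
  ultimately show False
    using marrow unfolding marrow_def by blast
qed

lemma swap_context_empty:
  assumes "u @ o1 @ v = [x, y]" "u @ o2 @ v = [y, x]" "x \<noteq> y"
  shows "u = [] \<and> v = []"
proof (intro conjI; rule ccontr)
  assume "u \<noteq> []"
  then have "hd u = x" "hd u = y"
    using arg_cong[OF assms(1), of hd] arg_cong[OF assms(2), of hd] by simp_all
  then show False using assms(3) by simp
next
  assume "v \<noteq> []"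
  then have "last v = y" "last v = x"
    using arg_cong[OF assms(1), of last] arg_cong[OF assms(2), of last] by simp_all
  then show False using assms(3) by simp
qed

lemma Jm2_swap_empty:
  assumes "x \<noteq> y"
  shows "Jm2 A [x, y] [y, x] [y, x] [x, y] = {}"
proof (rule ccontr)
  assume "Jm2 A [x, y] [y, x] [y, x] [x, y] \<noteq> {}"
  then obtain s t o1 o2 where
    eval: "mev s o1 = [x, y]" "mev t o1 = [y, x]" "mev s o2 = [y, x]" "mev t o2 = [x, y]"
    unfolding Jm2_def Jm_def by (auto simp: eq_commute[of "[_, _]"])
  show False
  proof (cases s)
    case (MConst w)
    then show False using eval assms by simp
  next
    case (MLin u v)
    then have "o1 = [x, y]"
      using eval(1,3) swap_context_empty[of u o1 v x y o2] assms by simp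
    moreover have "length (mev t o1) = length o1"
      using eval(2) \<open>o1 = [x, y]\<close> by simp
    ultimately show False
      using eval assms by (cases t) auto
  qed
qed

theorem mainTheorem14:
  shows "\<exists>(A :: nat set) a c. finite A \<and> A \<noteq> {} \<and> a \<in> lists A \<and> c \<in> lists A \<and>
           \<not> mprop A a (rev a) c (rev c)"
proof (intro exI conjI)
  let ?A = "{0::nat, 1}"
  show "finite ?A" "?A \<noteq> {}" "[0, 1] \<in> lists ?A" "[1, 0] \<in> lists ?A"
    by simp_all
  have "\<not> marrow ?A [0, 1] [1, 0] [1, 0] [0, 1]"
    using marrow_imp_Jm2_nonempty[of ?A "[0, 1]" "[1, 0]"] Jm2_swap_empty[of 0 1 ?A] by auto
  then show "\<not> mprop ?A [0, 1] (rev [0, 1]) [1, 0] (rev [1, 0])"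
    unfolding mprop_def by simp
qed

end
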